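(* Let $r\in\{0,\ldots,N\}$ and suppose $\xi_r(\varpi^N)<1/2$. Then for all $A,A'\in\mathbb{R}^{n\times s}$, $$\|\phi(A')-\phi(A)\|_1\le \frac{1}{1-2\xi_r(\varpi^N)}\big(\delta_r(A')+\delta_r(A)\big).$$
   Context: Data: integers $n,s,N\ge1$ and a dataset $\varpi^N=((x_1,y_1),\ldots,(x_N,y_N))$ with $x_t\in\mathbb{R}^n$, $y_t\in\mathbb{R}$. Let $\mathbb{T}=\{1,\ldots,N\}$, $\mathbb{S}=\{1,\ldots,s\}$. For $A=[a_1\ \cdots\ a_s]\in\mathbb{R}^{n\times s}$, $\sigma_A:\mathbb{T}\to\mathbb{S}$ is a switching signal satisfying $\sigma_A(t)\in\arg\min_{i\in\mathbb{S}}|y_t-x_t^\top a_i|$ for all $t$, selected uniquely by a fixed rule depending only on $A$ and the data (among all admissible choices, one maximizing $\min_{i}|I_i(A)|$, ties then broken by assigning the smallest admissible index). $I_i(A)=\{t\in\mathbb{T}:\sigma_A(t)=i\}$. Define $\phi(A)=\big(y_1-x_1^\top a_{\sigma_A(1)},\ldots,y_N-x_N^\top a_{\sigma_A(N)}\big)^\top\in\mathbb{R}^N$ and $\mathcal{J}(A)=\|\phi(A)\|_1$. For $\mathcal{T}\subset\mathbb{T}$, $\phi_{\mathcal{T}}(A)$ is the subvector of $\phi(A)$ indexed by $\mathcal{T}$. $\mathcal{S}_r=\{w\in\mathbb{R}^N:\|w\|_0\le r\}$, and $\delta_r(A)=\inf_{w\in\mathcal{S}_r}\|\phi(A)-w\|_1$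 (sum of the $N-r$ smallest absolute entries of $\phi(A)$). The $r$-th concentration ratio is $$\xi_r(\varpi^N)=\sup\Big\{\frac{\|\phi_{\mathcal{T}}(A)-\phi_{\mathcal{T}}(A')\|_1}{\|\phi(A)-\phi(A')\|_1}: A,A'\in\mathbb{R}^{n\times s},\ \mathcal{T}\subset\mathbb{T},\ \phi(A)\ne\phi(A'),\ |\mathcal{T}|\le r\Big\}.$$ *)

theory Defs
  imports Complex_Main "HOL-Library.List_Lexorder"
begin

text \<open>Data: x t j (t in {1..N}, j in {1..n}) is the j-th entry of x_t; y t is y_t.
  A matrix A in R^{n x s} is represented as A :: nat => nat => real with A j i the
  j-th entry of the i-th column a_i (entries outside the index range are irrelevant).\<close>

definition ip :: "nat \<Rightarrow> (nat \<Rightarrow> nat \<Rightarrow> real) \<Rightarrow> (nat \<Rightarrow> nat \<Rightarrow> real) \<Rightarrow> nat \<Rightarrow> nat \<Rightarrow> real" where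
  "ip n x A t i = (\<Sum>j\<in>{1..n}. x t j * A j i)"

definition argminset :: "nat \<Rightarrow> nat \<Rightarrow> (nat \<Rightarrow> nat \<Rightarrow> real) \<Rightarrow> (nat \<Rightarrow> real)
    \<Rightarrow> (nat \<Rightarrow> nat \<Rightarrow> real) \<Rightarrow> nat \<Rightarrow> nat set" where
  "argminset n s x y A t = {i \<in> {1..s}. \<forall>k\<in>{1..s}.
      \<bar>y t - ip n x A t i\<bar> \<le> \<bar>y t - ip n x A t k\<bar>}"

text \<open>Admissible switching signals, encoded as lists [sigma 1, ..., sigma N].\<close>
definition admissible :: "nat \<Rightarrow> nat \<Rightarrow> nat \<Rightarrow> (nat \<Rightarrow> nat \<Rightarrow> real) \<Rightarrow> (nat \<Rightarrow> real)
    \<Rightarrow> (nat \<Rightarrow> nat \<Rightarrow> real) \<Rightarrow> nat list set" where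
  "admissible n s N x y A = {ls. length ls = N \<and>
      (\<forall>t\<in>{1..N}. ls ! (t - 1) \<in> argminset n s x y A t)}"

definition minclass :: "nat \<Rightarrow> nat \<Rightarrow> nat list \<Rightarrow> nat" where
  "minclass s N ls = Min ((\<lambda>i. card {t \<in> {1..N}. ls ! (t - 1) = i}) ` {1..s})"

text \<open>Selection rule: among admissible signals maximize min_i |I_i(A)|; ties broken
  lexicographically (smallest admissible index first).\<close>
definition sigmaList :: "nat \<Rightarrow> nat \<Rightarrow> nat \<Rightarrow> (nat \<Rightarrow> nat \<Rightarrow> real) \<Rightarrow> (nat \<Rightarrow> real)
    \<Rightarrow> (nat \<Rightarrow> nat \<Rightarrow> real) \<Rightarrow> nat list" where
  "sigmaList n s N x y A =
     (let Adm = admissible n s N x y A;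
          m = Max (minclass s N ` Adm)
      in Min {ls \<in> Adm. minclass s N ls = m})"

definition sigmaA :: "nat \<Rightarrow> nat \<Rightarrow> nat \<Rightarrow> (nat \<Rightarrow> nat \<Rightarrow> real) \<Rightarrow> (nat \<Rightarrow> real)
    \<Rightarrow> (nat \<Rightarrow> nat \<Rightarrow> real) \<Rightarrow> nat \<Rightarrow> nat" where
  "sigmaA n s N x y A t = sigmaList n s N x y A ! (t - 1)"

definition phi :: "nat \<Rightarrow> nat \<Rightarrow> nat \<Rightarrow> (nat \<Rightarrow> nat \<Rightarrow> real) \<Rightarrow> (nat \<Rightarrow> real)
    \<Rightarrow> (nat \<Rightarrow> nat \<Rightarrow> real) \<Rightarrow> nat \<Rightarrow> real" where
  "phi n s N x y A t = y t - ip n x A t (sigmaA n s N x y A t)"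

definition delta :: "nat \<Rightarrow> nat \<Rightarrow> nat \<Rightarrow> (nat \<Rightarrow> nat \<Rightarrow> real) \<Rightarrow> (nat \<Rightarrow> real)
    \<Rightarrow> nat \<Rightarrow> (nat \<Rightarrow> nat \<Rightarrow> real) \<Rightarrow> real" where
  "delta n s N x y r A = Inf {(\<Sum>t\<in>{1..N}. \<bar>phi n s N x y A t - w t\<bar>) | w :: nat \<Rightarrow> real.
       card {t \<in> {1..N}. w t \<noteq> 0} \<le> r}"

definition xi :: "nat \<Rightarrow> nat \<Rightarrow> nat \<Rightarrow> (nat \<Rightarrow> nat \<Rightarrow> real) \<Rightarrow> (nat \<Rightarrow> real)
    \<Rightarrow> nat \<Rightarrow> real" where
  "xi n s N x y r = Sup {(\<Sum>t\<in>T. \<bar>phi n s N x y A t - phi n s N x y A' t\<bar>) /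
        (\<Sum>t\<in>{1..N}. \<bar>phi n s N x y A t - phi n s N x y A' t\<bar>) | A A' T.
        T \<subseteq> {1..N} \<and> card T \<le> r \<and> (\<exists>t\<in>{1..N}. phi n s N x y A t \<noteq> phi n s N x y A' t)}"

end

theory Submission
  imports Defs
begin

text \<open>Let \<open>D = \<parallel>\<phi>(A') - \<phi>(A)\<parallel>\<^sub>1\<close> and let \<open>w, w'\<close> be \<open>r\<close>-sparse. On the support of \<open>w\<close>, and
  likewise on that of \<open>w'\<close>, the concentration ratio bounds the contribution to \<open>D\<close> by
  \<open>\<xi>\<^sub>r D\<close>; off both supports the triangle inequality bounds it by
  \<open>\<parallel>\<phi>(A') - w'\<parallel>\<^sub>1 + \<parallel>\<phi>(A) - w\<parallel>\<^sub>1\<close>. Hence \<open>(1 - 2\<xi>\<^sub>r) D\<close> is a lower bound for these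
  approximation errors, and taking the infimum over \<open>w, w'\<close> yields \<open>\<delta>\<^sub>r(A') + \<delta>\<^sub>r(A)\<close>.\<close>

lemma l1_dist_le_sparse_approx_errors:
  fixes P Q w w' :: "nat \<Rightarrow> real" and c :: real
  assumes concentrated: "\<And>T. T \<subseteq> {1..N} \<Longrightarrow> card T \<le> r \<Longrightarrow>
      (\<Sum>t\<in>T. \<bar>Q t - P t\<bar>) \<le> c * (\<Sum>t\<in>{1..N}. \<bar>Q t - P t\<bar>)"
    and "card {t \<in> {1..N}. w t \<noteq> 0} \<le> r"
    and "card {t \<in> {1..N}. w' t \<noteq> 0} \<le> r"
  shows "(1 - 2 * c) * (\<Sum>t\<in>{1..N}. \<bar>Q t - P t\<bar>) \<le>
     (\<Sum>t\<in>{1..N}. \<bar>Q t - w' t\<bar>) + (\<Sum>t\<in>{1..N}. \<bar>P t - w t\<bar>)"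
proof -
  define W where "W = {t \<in> {1..N}. w t \<noteq> 0}"
  define W' where "W' = {t \<in> {1..N}. w' t \<noteq> 0}"
  define R where "R = {1..N} - (W \<union> W')"
  define D where "D = (\<Sum>t\<in>{1..N}. \<bar>Q t - P t\<bar>)"
  have "D = (\<Sum>t\<in>W \<union> W'. \<bar>Q t - P t\<bar>) + (\<Sum>t\<in>R. \<bar>Q t - P t\<bar>)"
    unfolding D_def R_def
    by (subst sum.subset_diff[of "W \<union> W'"]) (auto simp: W_def W'_def)
  also have "(\<Sum>t\<in>W \<union> W'. \<bar>Q t - P t\<bar>) \<le> (\<Sum>t\<in>W. \<bar>Q t - P t\<bar>) + (\<Sum>t\<in>W'. \<bar>Q t - P t\<bar>)"
    by (simp add: W_def W'_def sum_Un sum_nonneg)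
  also have "\<dots> \<le> c * D + c * D"
    using assms(2,3) unfolding W_def W'_def D_def by (intro add_mono concentrated) auto
  also have "(\<Sum>t\<in>R. \<bar>Q t - P t\<bar>) \<le> (\<Sum>t\<in>R. \<bar>Q t - w' t\<bar> + \<bar>P t - w t\<bar>)"
    by (rule sum_mono) (auto simp: R_def W_def W'_def)
  also have "\<dots> \<le> (\<Sum>t\<in>{1..N}. \<bar>Q t - w' t\<bar> + \<bar>P t - w t\<bar>)"
    by (rule sum_mono2) (auto simp: R_def)
  finally show ?thesis
    unfolding D_def by (simp add: sum.distrib algebra_simps)
qed

lemma xi_ratios_bdd_above:
  "bdd_above {(\<Sum>t\<in>T. \<bar>phi n s N x y A t - phi n s N x y A' t\<bar>) /
        (\<Sum>t\<in>{1..N}. \<bar>phi n s N x y A t - phi n s N x y A' t\<bar>) | A A' T.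
        T \<subseteq> {1..N} \<and> card T \<le> r \<and> (\<exists>t\<in>{1..N}. phi n s N x y A t \<noteq> phi n s N x y A' t)}"
proof (rule bdd_aboveI[of _ 1], safe)
  fix A A' :: "nat \<Rightarrow> nat \<Rightarrow> real" and T :: "nat set"
  assume "T \<subseteq> {1..N}"
  then have "(\<Sum>t\<in>T. \<bar>phi n s N x y A t - phi n s N x y A' t\<bar>)
      \<le> (\<Sum>t\<in>{1..N}. \<bar>phi n s N x y A t - phi n s N x y A' t\<bar>)"
    by (intro sum_mono2) auto
  moreover have "0 \<le> (\<Sum>t\<in>{1..N}. \<bar>phi n s N x y A t - phi n s N x y A' t\<bar>)"
    by (simp add: sum_nonneg)
  ultimately show "(\<Sum>t\<in>T. \<bar>phi n s N x y A t - phi n s N x y A' t\<bar>) /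
      (\<Sum>t\<in>{1..N}. \<bar>phi n s N x y A t - phi n s N x y A' t\<bar>) \<le> 1"
    by (smt (verit) divide_le_eq_1)
qed

lemma partial_l1_dist_le_xi:
  assumes "T \<subseteq> {1..N}" and "card T \<le> r"
  shows "(\<Sum>t\<in>T. \<bar>phi n s N x y A' t - phi n s N x y A t\<bar>)
    \<le> xi n s N x y r * (\<Sum>t\<in>{1..N}. \<bar>phi n s N x y A' t - phi n s N x y A t\<bar>)"
proof (cases "\<exists>t\<in>{1..N}. phi n s N x y A' t \<noteq> phi n s N x y A t")
  case True
  define D where "D = (\<Sum>t\<in>{1..N}. \<bar>phi n s N x y A' t - phi n s N x y A t\<bar>)"
  obtain t0 where "t0 \<in> {1..N}" "phi n s N x y A' t0 \<noteq> phi n s N x y A t0"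
    using True by blast
  then have "D > 0"
    unfolding D_def by (intro sum_pos2[of _ t0]) auto
  have "(\<Sum>t\<in>T. \<bar>phi n s N x y A' t - phi n s N x y A t\<bar>) / D \<le> xi n s N x y r"
    unfolding xi_def D_def
    by (rule cSup_upper[OF _ xi_ratios_bdd_above])
      (use assms True in blast)
  then show ?thesis
    using \<open>D > 0\<close> unfolding D_def by (simp add: pos_divide_le_eq mult.commute)
next
  case False
  then have "(\<Sum>t\<in>T. \<bar>phi n s N x y A' t - phi n s N x y A t\<bar>) = 0"
    "(\<Sum>t\<in>{1..N}. \<bar>phi n s N x y A' t - phi n s N x y A t\<bar>) = 0"
    using assms(1) by (auto intro!: sum.neutral)
  then show ?thesis by simp
qed

lemma le_delta:
  assumes "\<And>w. card {t \<in> {1..N}. w t \<noteq> 0} \<le> r \<Longrightarrow> c \<le> (\<Sum>t\<in>{1..N}. \<bar>phi n s N x y A t - w t\<bar>)"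
  shows "c \<le> delta n s N x y r A"
  unfolding delta_def
proof (rule cInf_greatest)
  have "(\<Sum>t\<in>{1..N}. \<bar>phi n s N x y A t - 0\<bar>) \<in> {\<Sum>t\<in>{1..N}. \<bar>phi n s N x y A t - w t\<bar> |w.
      card {t \<in> {1..N}. w t \<noteq> 0} \<le> r}"
    by (intro CollectI exI[of _ "\<lambda>_. 0"]) simp
  then show "{\<Sum>t\<in>{1..N}. \<bar>phi n s N x y A t - w t\<bar> |w. card {t \<in> {1..N}. w t \<noteq> 0} \<le> r} \<noteq> {}"
    by blast
qed (use assms in blast)

lemma le_delta_add_delta:
  assumes "\<And>w w'. card {t \<in> {1..N}. w t \<noteq> 0} \<le> r \<Longrightarrow> card {t \<in> {1..N}. w' t \<noteq> 0} \<le> r \<Longrightarrow>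
      c \<le> (\<Sum>t\<in>{1..N}. \<bar>phi n s N x y A' t - w' t\<bar>) + (\<Sum>t\<in>{1..N}. \<bar>phi n s N x y A t - w t\<bar>)"
  shows "c \<le> delta n s N x y r A' + delta n s N x y r A"
proof -
  have "c - delta n s N x y r A \<le> delta n s N x y r A'"
  proof (rule le_delta)
    fix w' :: "nat \<Rightarrow> real" assume w': "card {t \<in> {1..N}. w' t \<noteq> 0} \<le> r"
    have "c - (\<Sum>t\<in>{1..N}. \<bar>phi n s N x y A' t - w' t\<bar>) \<le> delta n s N x y r A"
      using assms[OF _ w'] by (intro le_delta) (simp add: algebra_simps)
    then show "c - delta n s N x y r A \<le> (\<Sum>t\<in>{1..N}. \<bar>phi n s N x y A' t - w' t\<bar>)"
      by linarith
  qed
  then show ?thesis by simp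
qed

theorem mainTheorem3:
  fixes n s N r :: nat and x :: "nat \<Rightarrow> nat \<Rightarrow> real" and y :: "nat \<Rightarrow> real"
    and A A' :: "nat \<Rightarrow> nat \<Rightarrow> real"
  assumes "n \<ge> 1" and "s \<ge> 1" and "N \<ge> 1" and "r \<le> N"
    and "xi n s N x y r < 1/2"
  shows "(\<Sum>t\<in>{1..N}. \<bar>phi n s N x y A' t - phi n s N x y A t\<bar>)
           \<le> 1 / (1 - 2 * xi n s N x y r) * (delta n s N x y r A' + delta n s N x y r A)"
proof -
  have "(1 - 2 * xi n s N x y r) * (\<Sum>t\<in>{1..N}. \<bar>phi n s N x y A' t - phi n s N x y A t\<bar>)
      \<le> delta n s N x y r A' + delta n s N x y r A"
    by (intro le_delta_add_delta l1_dist_le_sparse_approx_errors partial_l1_dist_le_xi)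
  moreover have "1 - 2 * xi n s N x y r > 0"
    using assms(5) by simp
  ultimately show ?thesis
    by (simp add: pos_le_divide_eq mult.commute)
qed

end
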